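(* Let $p,q,r$ be pairwise distinct primes with $p<q$ and $p<r$. Let $q',r'\in\{1,\dots,p-1\}$ be the inverses of $q,r$ modulo $p$, and let $M=\max\{q',r'\}$, $m=\min\{q',r'\}$. Then for every integer $k$, $$F_k-F_{k-q}-F_{k-r}+F_{k-q-r}=\begin{cases}0,& a_k<M+m-p,\\ -1,& M+m-p\le a_k<m,\\ 0,& m\le a_k<M,\\ 1,& M\le a_k<M+m,\\ 0,& M+m\le a_k.\end{cases}$$ More generally, let $(t,u,v)$ be any permutation of $(p,q,r)$, let $x_k$ denote $a_k$, $b_k$ or $c_k$ according as $t=p$, $t=q$ or $t=r$, let $u',v'\in\{1,\dots,t-1\}$ be the inverses of $u,v$ modulo $t$, and $M=\max\{u',v'\}$, $m=\min\{u',v'\}$. Then the same formula holds for $F_k-F_{k-u}-F_{k-v}+F_{k-u-v}$ with $a_k$ replaced by $x_k$ and $p$ replaced by $t$.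
   Context: For each integer $k$, let $a_k,b_k,c_k$ be the unique integers with $0\le a_k<p$, $0\le b_k<q$, $0\le c_k<r$ and $k\equiv a_kqr+b_krp+c_kpq \pmod{pqr}$, and define $F_k=\frac{a_k}{p}+\frac{b_k}{q}+\frac{c_k}{r}-\frac{k}{pqr}$. *)

theory Defs
  imports "HOL-Number_Theory.Number_Theory"
begin

definition abc :: "int \<Rightarrow> int \<Rightarrow> int \<Rightarrow> int \<Rightarrow> int \<times> int \<times> int" where
  "abc p q r k = (THE x. case x of (a, b, c) \<Rightarrow>
      0 \<le> a \<and> a < p \<and> 0 \<le> b \<and> b < q \<and> 0 \<le> c \<and> c < r \<and>
      [k = a * q * r + b * r * p + c * p * q] (mod p * q * r))"

definition acoord :: "int \<Rightarrow> int \<Rightarrow> int \<Rightarrow> int \<Rightarrow> int" where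
  "acoord p q r k = fst (abc p q r k)"

definition bcoord :: "int \<Rightarrow> int \<Rightarrow> int \<Rightarrow> int \<Rightarrow> int" where
  "bcoord p q r k = fst (snd (abc p q r k))"

definition ccoord :: "int \<Rightarrow> int \<Rightarrow> int \<Rightarrow> int \<Rightarrow> int" where
  "ccoord p q r k = snd (snd (abc p q r k))"

definition Fk :: "int \<Rightarrow> int \<Rightarrow> int \<Rightarrow> int \<Rightarrow> real" where
  "Fk p q r k = real_of_int (acoord p q r k) / real_of_int p
              + real_of_int (bcoord p q r k) / real_of_int q
              + real_of_int (ccoord p q r k) / real_of_int r
              - real_of_int k / real_of_int (p * q * r)"

end

theory Submission
  imports Defs
begin

text \<open>
  Write \<open>t\<close> for the distinguished prime and \<open>u, v\<close> for the other two.  The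
  coordinate \<open>x_j\<close> belonging to \<open>t\<close> is the unique residue in \<open>[0, t)\<close> with
  \<open>x_j u v \<equiv> j (mod t)\<close>, and likewise for the other two coordinates.  Hence subtracting
  \<open>u\<close> from \<open>j\<close> leaves the \<open>u\<close>-coordinate unchanged and replaces \<open>x_j\<close> by
  \<open>(x_j - v') mod t\<close>, because \<open>u \<equiv> v' u v (mod t)\<close>; symmetrically for \<open>v\<close>.  In the
  second difference \<open>F_k - F_{k-u} - F_{k-v} + F_{k-u-v}\<close> the \<open>u\<close>- and \<open>v\<close>-coordinates
  and the linear term therefore cancel, leaving
  \<open>(x - (x - v') mod t - (x - u') mod t + (x - u' - v') mod t) / t\<close> with \<open>x = x_k\<close>,
  which is evaluated by counting the wrap-arounds of the three residues.
\<close>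

definition residue_coord :: "int \<Rightarrow> int \<Rightarrow> (int \<Rightarrow> int) \<Rightarrow> bool" where
  "residue_coord s P X \<longleftrightarrow> (\<forall>j. 0 \<le> X j \<and> X j < s \<and> [X j * P = j] (mod s))"

lemma residue_of_cofactor_unique:
  fixes s P y y' j :: int
  assumes "coprime P s" "0 \<le> y" "y < s" "0 \<le> y'" "y' < s"
    and "[y * P = j] (mod s)" "[y' * P = j] (mod s)"
  shows "y = y'"
proof -
  have "[y * P = y' * P] (mod s)"
    using assms(6,7) by (metis cong_sym cong_trans)
  hence "[y = y'] (mod s)"
    using assms(1) by (simp add: cong_mult_rcancel)
  thus ?thesis
    using assms(2-5) by (simp add: cong_less_imp_eq_int)
qed

lemma residue_of_cofactor_exists:
  fixes s P j :: int
  assumes "0 < s" "coprime P s"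
  obtains y where "0 \<le> y" "y < s" "[y * P = j] (mod s)"
proof -
  obtain i where i: "[P * i = 1] (mod s)"
    using cong_solve_coprime_int[OF assms(2)] by blast
  have "[(j * i) mod s * P = j * (P * i)] (mod s)"
    by (simp add: cong_def mod_mult_right_eq ac_simps)
  also have "[j * (P * i) = j * 1] (mod s)"
    using i by (rule cong_scalar_left)
  finally show ?thesis
    using assms(1) by (intro that[of "(j * i) mod s"]) simp_all
qed

lemma crt_triple_cong_iff:
  fixes p q r a b c k :: int
  assumes "coprime p q" "coprime q r" "coprime p r"
  shows "[k = a*q*r + b*r*p + c*p*q] (mod p*q*r) \<longleftrightarrow>
         [a*(q*r) = k] (mod p) \<and> [b*(r*p) = k] (mod q) \<and> [c*(p*q) = k] (mod r)"
    (is "[k = ?S] (mod _) \<longleftrightarrow> _")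
proof -
  have "[?S = a*(q*r)] (mod p)"
    by (simp add: cong_iff_dvd_diff algebra_simps)
  moreover have "[?S = b*(r*p)] (mod q)"
    by (simp add: cong_iff_dvd_diff algebra_simps)
  moreover have "[?S = c*(p*q)] (mod r)"
    by (simp add: cong_iff_dvd_diff algebra_simps)
  moreover have "[k = ?S] (mod p*q*r) \<longleftrightarrow>
      [k = ?S] (mod p) \<and> [k = ?S] (mod q) \<and> [k = ?S] (mod r)"
  proof
    assume "[k = ?S] (mod p*q*r)"
    then show "[k = ?S] (mod p) \<and> [k = ?S] (mod q) \<and> [k = ?S] (mod r)"
      by (metis cong_dvd_modulus dvd_triv_left dvd_triv_right dvd_mult2 mult.assoc)
  next
    assume "[k = ?S] (mod p) \<and> [k = ?S] (mod q) \<and> [k = ?S] (mod r)"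
    moreover have "coprime (p*q) r"
      using assms by simp
    ultimately show "[k = ?S] (mod p*q*r)"
      using assms(1) by (meson coprime_cong_mult)
  qed
  ultimately show ?thesis
    by (meson cong_sym cong_trans)
qed

lemma abc_eqI:
  fixes p q r a b c k :: int
  assumes cop: "coprime p q" "coprime q r" "coprime p r"
    and ranges: "0 \<le> a" "a < p" "0 \<le> b" "b < q" "0 \<le> c" "c < r"
    and congs: "[a*(q*r) = k] (mod p)" "[b*(r*p) = k] (mod q)" "[c*(p*q) = k] (mod r)"
  shows "abc p q r k = (a, b, c)"
  unfolding abc_def
proof (rule the_equality)
  show "case (a, b, c) of (a, b, c) \<Rightarrow> 0 \<le> a \<and> a < p \<and> 0 \<le> b \<and> b < q \<and> 0 \<le> c \<and> c < r \<and>
      [k = a * q * r + b * r * p + c * p * q] (mod p * q * r)"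
    using ranges congs by (simp add: crt_triple_cong_iff[OF cop])
next
  fix x
  assume "case x of (a, b, c) \<Rightarrow> 0 \<le> a \<and> a < p \<and> 0 \<le> b \<and> b < q \<and> 0 \<le> c \<and> c < r \<and>
      [k = a * q * r + b * r * p + c * p * q] (mod p * q * r)"
  then obtain a' b' c' where x: "x = (a', b', c')"
    and ranges': "0 \<le> a'" "a' < p" "0 \<le> b'" "b' < q" "0 \<le> c'" "c' < r"
    and congs': "[a'*(q*r) = k] (mod p)" "[b'*(r*p) = k] (mod q)" "[c'*(p*q) = k] (mod r)"
    by (auto simp: crt_triple_cong_iff[OF cop] split: prod.splits)
  have "coprime (q*r) p" "coprime (r*p) q" "coprime (p*q) r"
    using cop by (simp_all add: coprime_commute)
  then have "a' = a" "b' = b" "c' = c"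
    using residue_of_cofactor_unique ranges ranges' congs congs' by metis+
  then show "x = (a, b, c)"
    using x by simp
qed

lemma abc_residue_coords:
  fixes p q r :: int
  assumes pos: "0 < p" "0 < q" "0 < r"
    and cop: "coprime p q" "coprime q r" "coprime p r"
  shows "residue_coord p (q*r) (acoord p q r)" "residue_coord q (r*p) (bcoord p q r)"
    "residue_coord r (p*q) (ccoord p q r)"
proof -
  have cof: "coprime (q*r) p" "coprime (r*p) q" "coprime (p*q) r"
    using cop by (simp_all add: coprime_commute)
  have "0 \<le> acoord p q r k \<and> acoord p q r k < p \<and> [acoord p q r k * (q*r) = k] (mod p) \<and>
        0 \<le> bcoord p q r k \<and> bcoord p q r k < q \<and> [bcoord p q r k * (r*p) = k] (mod q) \<and>
        0 \<le> ccoord p q r k \<and> ccoord p q r k < r \<and> [ccoord p q r k * (p*q) = k] (mod r)" for k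
  proof -
    obtain a where a: "0 \<le> a" "a < p" "[a*(q*r) = k] (mod p)"
      using residue_of_cofactor_exists[OF pos(1) cof(1)] by blast
    obtain b where b: "0 \<le> b" "b < q" "[b*(r*p) = k] (mod q)"
      using residue_of_cofactor_exists[OF pos(2) cof(2)] by blast
    obtain c where c: "0 \<le> c" "c < r" "[c*(p*q) = k] (mod r)"
      using residue_of_cofactor_exists[OF pos(3) cof(3)] by blast
    have "abc p q r k = (a, b, c)"
      using abc_eqI[OF cop a(1,2) b(1,2) c(1,2) a(3) b(3) c(3)] .
    then show ?thesis
      using a b c by (simp add: acoord_def bcoord_def ccoord_def)
  qed
  then show "residue_coord p (q*r) (acoord p q r)" "residue_coord q (r*p) (bcoord p q r)"
    "residue_coord r (p*q) (ccoord p q r)"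
    by (simp_all add: residue_coord_def)
qed

lemma residue_coord_shift:
  fixes s P w d j :: int and X :: "int \<Rightarrow> int"
  assumes X: "residue_coord s P X" and "0 < s" "coprime P s"
    and w: "[w * P = d] (mod s)"
  shows "X (j - d) = (X j - w) mod s"
proof -
  have "[(X j - w) mod s * P = (X j - w) * P] (mod s)"
    by (simp add: cong_def mod_mult_left_eq)
  also have "(X j - w) * P = X j * P - w * P"
    by (simp add: algebra_simps)
  also have "[X j * P - w * P = j - d] (mod s)"
    using X w by (intro cong_diff) (simp_all add: residue_coord_def)
  finally have "[(X j - w) mod s * P = j - d] (mod s)" .
  moreover have "0 \<le> (X j - w) mod s" "(X j - w) mod s < s"
    using \<open>0 < s\<close> by simp_all
  ultimately show ?thesis
    using X \<open>coprime P s\<close> residue_of_cofactor_unique unfolding residue_coord_def by metis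
qed

definition window :: "int \<Rightarrow> int \<Rightarrow> int \<Rightarrow> int \<Rightarrow> int" where
  "window t u' v' x = (let M = max u' v'; m = min u' v' in
     if x < M + m - t then 0
     else if M + m - t \<le> x \<and> x < m then -1
     else if m \<le> x \<and> x < M then 0
     else if M \<le> x \<and> x < M + m then 1
     else 0)"

lemma of_int_window:
  "real_of_int (window t u' v' x) = (let M = max u' v'; m = min u' v' in
     if x < M + m - t then 0
     else if M + m - t \<le> x \<and> x < m then -1
     else if m \<le> x \<and> x < M then 0
     else if M \<le> x \<and> x < M + m then 1
     else 0)"
  by (simp add: window_def Let_def)

lemma mod_eq_add_multiple:
  fixes y c t :: int
  assumes "0 \<le> y + c * t" "y + c * t < t"
  shows "y mod t = y + c * t"
  using assms by (metis mod_mult_self1 mod_pos_pos_trivial)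

text \<open>The elementary count: each of the residues \<open>x - v'\<close>, \<open>x - u'\<close>, \<open>x - u' - v'\<close> wraps
  around according to the position of \<open>x\<close>, and the net number of wraps is the window value.\<close>
lemma second_difference_of_residues:
  fixes t x u' v' :: int
  assumes "0 \<le> x" "x < t" "1 \<le> u'" "u' \<le> t - 1" "1 \<le> v'" "v' \<le> t - 1"
  shows "x - (x - v') mod t - (x - u') mod t + (x - u' - v') mod t = t * window t u' v' x"
proof -
  have "(x - v') mod t = x - v' + (if x < v' then 1 else 0) * t"
    by (rule mod_eq_add_multiple) (use assms in auto)
  moreover have "(x - u') mod t = x - u' + (if x < u' then 1 else 0) * t"
    by (rule mod_eq_add_multiple) (use assms in auto)
  moreover have "(x - u' - v') mod t =
      x - u' - v' + (if x < u' + v' - t then 2 else if x < u' + v' then 1 else 0) * t"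
    by (rule mod_eq_add_multiple) (use assms in auto)
  ultimately show ?thesis
    using assms by (auto simp: window_def Let_def max_def min_def algebra_simps)
qed

lemma second_difference_formula:
  fixes t u v u' v' k :: int and X Y Z :: "int \<Rightarrow> int" and G :: "int \<Rightarrow> real"
  assumes pos: "0 < t" "0 < u" "0 < v"
    and cop: "coprime t u" "coprime u v" "coprime t v"
    and u': "1 \<le> u'" "u' \<le> t - 1" "[u * u' = 1] (mod t)"
    and v': "1 \<le> v'" "v' \<le> t - 1" "[v * v' = 1] (mod t)"
    and X: "residue_coord t (u*v) X" and Y: "residue_coord u (v*t) Y"
    and Z: "residue_coord v (t*u) Z"
    and G: "\<And>j. G j = X j / t + Y j / u + Z j / v - j / (t*u*v)"
  shows "G k - G (k - u) - G (k - v) + G (k - u - v) = window t u' v' (X k)"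
proof -
  have cofX: "coprime (u*v) t" and cofY: "coprime (v*t) u" and cofZ: "coprime (t*u) v"
    using cop by (simp_all add: coprime_commute)
  have Y_shift: "Y (j - u) = Y j" for j
  proof -
    have "[0 * (v*t) = u] (mod u)"
      by (simp add: cong_def)
    then have "Y (j - u) = (Y j - 0) mod u"
      by (rule residue_coord_shift[OF Y pos(2) cofY])
    then show ?thesis
      using Y pos by (simp add: residue_coord_def)
  qed
  have Z_shift: "Z (j - v) = Z j" for j
  proof -
    have "[0 * (t*u) = v] (mod v)"
      by (simp add: cong_def)
    then have "Z (j - v) = (Z j - 0) mod v"
      by (rule residue_coord_shift[OF Z pos(3) cofZ])
    then show ?thesis
      using Z pos by (simp add: residue_coord_def)
  qed
  have X_shift_u: "X (j - u) = (X j - v') mod t" for j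
  proof -
    have "[u * (v * v') = u * 1] (mod t)"
      using v'(3) by (rule cong_scalar_left)
    then have "[v' * (u*v) = u] (mod t)"
      by (simp add: ac_simps)
    then show ?thesis
      by (rule residue_coord_shift[OF X pos(1) cofX])
  qed
  have X_shift_v: "X (j - v) = (X j - u') mod t" for j
  proof -
    have "[v * (u * u') = v * 1] (mod t)"
      using u'(3) by (rule cong_scalar_left)
    then have "[u' * (u*v) = v] (mod t)"
      by (simp add: ac_simps)
    then show ?thesis
      by (rule residue_coord_shift[OF X pos(1) cofX])
  qed
  have X_shift_uv: "X (k - u - v) = (X k - u' - v') mod t"
    using X_shift_v[of "k - u"] by (simp add: X_shift_u mod_diff_left_eq algebra_simps)
  have Xk: "0 \<le> X k" "X k < t"
    using X by (simp_all add: residue_coord_def)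
  have "G k - G (k - u) - G (k - v) + G (k - u - v) =
      (X k - X (k - u) - X (k - v) + X (k - u - v)) / t"
    using Y_shift[of "k - v"] Z_shift[of "k - u"] pos
    by (simp add: G Y_shift Z_shift diff_divide_distrib add_divide_distrib algebra_simps)
  also have "X k - X (k - u) - X (k - v) + X (k - u - v) = t * window t u' v' (X k)"
    unfolding X_shift_uv unfolding X_shift_u X_shift_v
    using second_difference_of_residues[OF Xk u'(1,2) v'(1,2)] by (simp add: algebra_simps)
  finally show ?thesis
    using pos by simp
qed

lemma Fk_permuted_coords:
  fixes p q r t u v :: int
  assumes primes: "prime p" "prime q" "prime r" and distinct: "p \<noteq> q" "q \<noteq> r" "p \<noteq> r"
    and perm: "(t, u, v) \<in> {(p, q, r), (p, r, q), (q, p, r), (q, r, p), (r, p, q), (r, q, p)}"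
  obtains X Y Z where "residue_coord t (u*v) X" "residue_coord u (v*t) Y" "residue_coord v (t*u) Z"
    and "X = (if t = p then acoord p q r else if t = q then bcoord p q r else ccoord p q r)"
    and "\<And>j. Fk p q r j = X j / t + Y j / u + Z j / v - j / (t*u*v)"
proof -
  have "coprime p q" "coprime q r" "coprime p r"
    using primes distinct by (simp_all add: primes_coprime)
  moreover have "0 < p" "0 < q" "0 < r"
    using primes by (simp_all add: prime_gt_0_int)
  ultimately have A: "residue_coord p (q*r) (acoord p q r)"
    and B: "residue_coord q (r*p) (bcoord p q r)" and C: "residue_coord r (p*q) (ccoord p q r)"
    using abc_residue_coords by blast+
  from perm show ?thesis
  proof (elim insertE emptyE)
    assume "(t, u, v) = (p, q, r)"
    then show ?thesis
      using that[of "acoord p q r" "bcoord p q r" "ccoord p q r"] A B C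
      by (simp add: Fk_def ac_simps)
  next
    assume "(t, u, v) = (p, r, q)"
    then show ?thesis
      using that[of "acoord p q r" "ccoord p q r" "bcoord p q r"] A B C distinct
      by (simp add: Fk_def ac_simps)
  next
    assume "(t, u, v) = (q, p, r)"
    then show ?thesis
      using that[of "bcoord p q r" "acoord p q r" "ccoord p q r"] A B C distinct
      by (simp add: Fk_def ac_simps)
  next
    assume "(t, u, v) = (q, r, p)"
    then show ?thesis
      using that[of "bcoord p q r" "ccoord p q r" "acoord p q r"] A B C distinct
      by (simp add: Fk_def ac_simps)
  next
    assume "(t, u, v) = (r, p, q)"
    then show ?thesis
      using that[of "ccoord p q r" "acoord p q r" "bcoord p q r"] A B C distinct
      by (simp add: Fk_def ac_simps)
  next
    assume "(t, u, v) = (r, q, p)"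
    then show ?thesis
      using that[of "ccoord p q r" "bcoord p q r" "acoord p q r"] A B C distinct
      by (simp add: Fk_def ac_simps)
  qed
qed

theorem lemma3:
  fixes p q r t u v u' v' k :: int
  assumes "prime p" and "prime q" and "prime r"
    and "p \<noteq> q" and "q \<noteq> r" and "p \<noteq> r"
    and "p < q" and "p < r"
    and "(t, u, v) \<in> {(p, q, r), (p, r, q), (q, p, r), (q, r, p), (r, p, q), (r, q, p)}"
    and "1 \<le> u'" and "u' \<le> t - 1" and "[u * u' = 1] (mod t)"
    and "1 \<le> v'" and "v' \<le> t - 1" and "[v * v' = 1] (mod t)"
  shows "let M = max u' v'; m = min u' v';
             x = (if t = p then acoord p q r k
                  else if t = q then bcoord p q r k
                  else ccoord p q r k)
         in Fk p q r k - Fk p q r (k - u) - Fk p q r (k - v) + Fk p q r (k - u - v) =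
            (if x < M + m - t then 0
             else if M + m - t \<le> x \<and> x < m then -1
             else if m \<le> x \<and> x < M then 0
             else if M \<le> x \<and> x < M + m then 1
             else 0)"
proof -
  obtain X Y Z where X: "residue_coord t (u*v) X" and Y: "residue_coord u (v*t) Y"
    and Z: "residue_coord v (t*u) Z"
    and X_is_x: "X = (if t = p then acoord p q r else if t = q then bcoord p q r else ccoord p q r)"
    and F: "\<And>j. Fk p q r j = X j / t + Y j / u + Z j / v - j / (t*u*v)"
    using Fk_permuted_coords assms(1-6,9) by blast
  have "prime t" "prime u" "prime v" "t \<noteq> u" "u \<noteq> v" "t \<noteq> v"
    using assms(1-6,9) by auto
  then have pos: "0 < t" "0 < u" "0 < v" and cop: "coprime t u" "coprime u v" "coprime t v"
    by (simp_all add: prime_gt_0_int primes_coprime)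
  have diff: "Fk p q r k - Fk p q r (k - u) - Fk p q r (k - v) + Fk p q r (k - u - v) =
      window t u' v' (X k)"
    by (rule second_difference_formula[OF pos cop assms(10-15) X Y Z F])
  have Xk: "X k = (if t = p then acoord p q r k else if t = q then bcoord p q r k
      else ccoord p q r k)"
    by (simp add: X_is_x)
  show ?thesis
    using of_int_window[of t u' v' "X k"] unfolding diff Xk Let_def .
qed

end
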